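(* Let $(M,g,J,\kappa)$ be an almost Kähler manifold. Assume that $$\widetilde R(Z,\overline Z,W,\overline W)=R(Z,\overline Z,W,\overline W)$$ for all complex vector fields $Z,W$ of type $(1,0)$ (equivalently, $\widetilde R(X,JX,Y,JY)=R(X,JX,Y,JY)$ for all real vector fields $X,Y$). Then $J$ is integrable, i.e. $(M,g,J,\kappa)$ is a Kähler manifold.
   Context: An almost Kähler manifold $(M,g,J,\kappa)$: $\kappa$ a symplectic form, $J$ an almost complex structure with $g(\cdot,\cdot)=\kappa(\cdot,J\cdot)$ a $J$-Hermitian Riemannian metric; Kähler means $J$ integrable. $\nabla$ is the Levi-Civita connection of $g$; the Hermitian connection is $\widetilde\nabla_XY=\nabla_XY-\tfrac12 J(\nabla_XJ)Y$. For a connection $D$, its curvature 4-tensor is $g(D_XD_YZ-D_YD_XZ-D_{[X,Y]}Z,W)$; $R,\widetilde R$ are those of $\nabla,\widetilde\nabla$, extended complex-multilinearly. Type $(1,0)$ means a section of the $+i$-eigenbundle of $J$ in $TM\otimes\mathbb C$. *)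

theory Defs
  imports "HOL-Analysis.Analysis"
begin

text \<open>Local (chart) model: the manifold is an open set U in real^'n; tensor fields are
 given by their component fields. Vector fields are maps real^'n => real^'n.\<close>

definition pd :: "(real^'n::finite \<Rightarrow> real) \<Rightarrow> 'n \<Rightarrow> real^'n \<Rightarrow> real" where
  "pd f i x = frechet_derivative f (at x) (axis i 1)"

coinductive cinf :: "(real^'n::finite) set \<Rightarrow> (real^'n \<Rightarrow> real) \<Rightarrow> bool" for U where
  "(\<forall>x\<in>U. f differentiable (at x)) \<Longrightarrow> (\<forall>i. cinf U (pd f i)) \<Longrightarrow> cinf U f"

definition smooth_vf :: "(real^'n::finite) set \<Rightarrow> (real^'n \<Rightarrow> real^'n) \<Rightarrow> bool" where
  "smooth_vf U X = (\<forall>i. cinf U (\<lambda>x. X x $ i))"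

definition smooth_mf :: "(real^'n::finite) set \<Rightarrow> (real^'n \<Rightarrow> real^'n^'n) \<Rightarrow> bool" where
  "smooth_mf U A = (\<forall>i j. cinf U (\<lambda>x. A x $ i $ j))"

definition bil :: "real^'n^'n \<Rightarrow> real^'n \<Rightarrow> real^'n \<Rightarrow> real" where
  "bil A u v = u \<bullet> (A *v v)"

definition christoffel ::
  "(real^'n::finite \<Rightarrow> real^'n^'n) \<Rightarrow> real^'n \<Rightarrow> real^'n \<Rightarrow> real^'n \<Rightarrow> real^'n" where
  "christoffel g p u v = matrix_inv (g p) *v (\<chi> l.
      (bil (frechet_derivative g (at p) u) v (axis l 1)
     + bil (frechet_derivative g (at p) v) u (axis l 1)
     - bil (frechet_derivative g (at p) (axis l 1)) u v) / 2)"

definition lc :: "(real^'n::finite \<Rightarrow> real^'n^'n) \<Rightarrow> (real^'n \<Rightarrow> real^'n) \<Rightarrow> (real^'n \<Rightarrow> real^'n)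
    \<Rightarrow> real^'n \<Rightarrow> real^'n" where
  "lc g X Y p = frechet_derivative Y (at p) (X p) + christoffel g p (X p) (Y p)"

definition app :: "(real^'n::finite \<Rightarrow> real^'n^'n) \<Rightarrow> (real^'n \<Rightarrow> real^'n) \<Rightarrow> real^'n \<Rightarrow> real^'n" where
  "app J X = (\<lambda>p. J p *v X p)"

definition lie :: "(real^'n::finite \<Rightarrow> real^'n) \<Rightarrow> (real^'n \<Rightarrow> real^'n) \<Rightarrow> real^'n \<Rightarrow> real^'n" where
  "lie X Y p = frechet_derivative Y (at p) (X p) - frechet_derivative X (at p) (Y p)"

definition herm :: "(real^'n::finite \<Rightarrow> real^'n^'n) \<Rightarrow> (real^'n \<Rightarrow> real^'n^'n)
    \<Rightarrow> (real^'n \<Rightarrow> real^'n) \<Rightarrow> (real^'n \<Rightarrow> real^'n) \<Rightarrow> real^'n \<Rightarrow> real^'n" where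
  "herm g J X Y p = lc g X Y p - (1/2) *\<^sub>R (J p *v (lc g X (app J Y) p - J p *v lc g X Y p))"

definition curv :: "(real^'n::finite \<Rightarrow> real^'n^'n)
    \<Rightarrow> ((real^'n \<Rightarrow> real^'n) \<Rightarrow> (real^'n \<Rightarrow> real^'n) \<Rightarrow> real^'n \<Rightarrow> real^'n)
    \<Rightarrow> (real^'n \<Rightarrow> real^'n) \<Rightarrow> (real^'n \<Rightarrow> real^'n) \<Rightarrow> (real^'n \<Rightarrow> real^'n) \<Rightarrow> (real^'n \<Rightarrow> real^'n)
    \<Rightarrow> real^'n \<Rightarrow> real" where
  "curv g D X Y Z W p = bil (g p) (D X (D Y Z) p - D Y (D X Z) p - D (lie X Y) Z p) (W p)"

definition nijenhuis :: "(real^'n::finite \<Rightarrow> real^'n^'n) \<Rightarrow> (real^'n \<Rightarrow> real^'n) \<Rightarrow> (real^'n \<Rightarrow> real^'n)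
    \<Rightarrow> real^'n \<Rightarrow> real^'n" where
  "nijenhuis J X Y p = lie (app J X) (app J Y) p - J p *v lie (app J X) Y p
      - J p *v lie X (app J Y) p - lie X Y p"

definition integrable_acs :: "(real^'n::finite) set \<Rightarrow> (real^'n \<Rightarrow> real^'n^'n) \<Rightarrow> bool" where
  "integrable_acs U J = (\<forall>X Y. smooth_vf U X \<longrightarrow> smooth_vf U Y \<longrightarrow> (\<forall>p\<in>U. nijenhuis J X Y p = 0))"

definition almost_kahler :: "(real^'n::finite) set \<Rightarrow> (real^'n \<Rightarrow> real^'n^'n) \<Rightarrow> (real^'n \<Rightarrow> real^'n^'n)
    \<Rightarrow> (real^'n \<Rightarrow> real^'n^'n) \<Rightarrow> bool" where
  "almost_kahler U g J \<kappa> \<longleftrightarrow> open U \<and> smooth_mf U g \<and> smooth_mf U J \<and> smooth_mf U \<kappa> \<and>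
    (\<forall>p\<in>U. J p ** J p = - mat 1) \<and>
    (\<forall>p\<in>U. transpose (\<kappa> p) = - \<kappa> p \<and> invertible (\<kappa> p)) \<and>
    (\<forall>p\<in>U. \<forall>i j k.
        frechet_derivative \<kappa> (at p) (axis i 1) $ j $ k
      + frechet_derivative \<kappa> (at p) (axis j 1) $ k $ i
      + frechet_derivative \<kappa> (at p) (axis k 1) $ i $ j = 0) \<and>
    (\<forall>p\<in>U. g p = \<kappa> p ** J p) \<and>
    (\<forall>p\<in>U. transpose (g p) = g p \<and> (\<forall>v. v \<noteq> 0 \<longrightarrow> bil (g p) v v > 0)) \<and>
    (\<forall>p\<in>U. transpose (J p) ** g p ** J p = g p)"

end

theory Submission
  imports Defs
begin

text \<open>
  Let \<open>\<nabla>\<close> be the Levi-Civita connection. Since \<open>\<kappa>\<close> is closed and \<open>\<nabla>\<close> is torsion free,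
  the cyclic sum of \<open>\<nabla>\<kappa>\<close> vanishes; as \<open>g((\<nabla>\<^sub>x J) u, v) = (\<nabla>\<^sub>x \<kappa>)(u, v)\<close>, this
  gives the almost Kaehler identity \<open>\<nabla>\<^sub>J\<^sub>x J = - J \<nabla>\<^sub>x J\<close>.
  The Hermitian connection is \<open>\<nabla>\<^sub>X Y / 2 - J \<nabla>\<^sub>X (J Y) / 2\<close>, so its curvature is
  \<open>R(X,Y)Z / 2 - J R(X,Y)(J Z) / 2 - [\<nabla>\<^sub>X J, \<nabla>\<^sub>Y J] Z / 4\<close>, where
  \<open>[\<nabla>\<^sub>x J, \<nabla>\<^sub>J\<^sub>x J] = 2 J (\<nabla>\<^sub>x J)\<^sup>2\<close> by the identity above.
  Adding the hypothesis at \<open>(x, J x, y, J y)\<close> and at \<open>(x, J x, J y, - y)\<close>, the Riemannian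
  terms cancel and what remains is \<open>|(\<nabla>\<^sub>x J) y|\<^sup>2 = 0\<close>. So \<open>\<nabla>J = 0\<close>, and with it
  the Nijenhuis tensor vanishes.
\<close>

section \<open>Componentwise differential calculus\<close>

lemma has_derivative_vec_nth_iff:
  fixes f :: "'a::real_normed_vector \<Rightarrow> 'b::euclidean_space^'n"
  shows "(f has_derivative f') (at p) \<longleftrightarrow> (\<forall>i. ((\<lambda>x. f x $ i) has_derivative (\<lambda>h. f' h $ i)) (at p))"
proof -
  have "(f has_derivative f') (at p) \<longleftrightarrow>
      (\<forall>i\<in>Basis. ((\<lambda>x. f x \<bullet> i) has_derivative (\<lambda>x. f' x \<bullet> i)) (at p))"
    using has_derivative_componentwise_within[of f f' p UNIV] by simp
  also have "\<dots> \<longleftrightarrow> (\<forall>i. \<forall>u\<in>Basis. ((\<lambda>x. f x $ i \<bullet> u) has_derivative (\<lambda>h. f' h $ i \<bullet> u)) (at p))"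
    unfolding Basis_vec_def by (auto simp: inner_axis)
  also have "\<dots> \<longleftrightarrow> (\<forall>i. ((\<lambda>x. f x $ i) has_derivative (\<lambda>h. f' h $ i)) (at p))"
    using has_derivative_componentwise_within[of "\<lambda>x. f x $ _" "\<lambda>h. f' h $ _" p UNIV] by simp
  finally show ?thesis .
qed

lemma differentiable_vec_nth_iff:
  fixes f :: "'a::real_normed_vector \<Rightarrow> 'b::euclidean_space^'n"
  shows "f differentiable (at p) \<longleftrightarrow> (\<forall>i. (\<lambda>x. f x $ i) differentiable (at p))"
proof
  assume "f differentiable (at p)"
  then show "\<forall>i. (\<lambda>x. f x $ i) differentiable (at p)"
    by (auto simp: has_derivative_vec_nth_iff differentiable_def)
next
  assume "\<forall>i. (\<lambda>x. f x $ i) differentiable (at p)"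
  then obtain F where "\<And>i. ((\<lambda>x. f x $ i) has_derivative F i) (at p)"
    unfolding differentiable_def by metis
  then have "(f has_derivative (\<lambda>h. \<chi> i. F i h)) (at p)"
    unfolding has_derivative_vec_nth_iff by simp
  then show "f differentiable (at p)" by (auto simp: differentiable_def)
qed

lemma frechet_derivative_vec_nth:
  fixes f :: "'a::real_normed_vector \<Rightarrow> 'b::euclidean_space^'n"
  assumes "f differentiable (at p)"
  shows "frechet_derivative f (at p) h $ i = frechet_derivative (\<lambda>x. f x $ i) (at p) h"
proof -
  have "((\<lambda>x. f x $ i) has_derivative (\<lambda>h. frechet_derivative f (at p) h $ i)) (at p)"
    using assms frechet_derivative_works has_derivative_vec_nth_iff by blast
  from frechet_derivative_at[OF this] show ?thesis by metis
qed

lemma frechet_derivative_mat_nth: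
  fixes A :: "'a::real_normed_vector \<Rightarrow> real^'n^'m"
  assumes "A differentiable (at p)"
  shows "frechet_derivative A (at p) h $ i $ j = frechet_derivative (\<lambda>x. A x $ i $ j) (at p) h"
  using assms frechet_derivative_vec_nth differentiable_vec_nth_iff by metis

lemma frechet_derivative_cong_open:
  assumes "open U" "p \<in> U" "\<And>q. q \<in> U \<Longrightarrow> f q = g q"
  shows "frechet_derivative f (at p) = frechet_derivative g (at p)"
proof -
  have "(f has_derivative D) (at p) \<longleftrightarrow> (g has_derivative D) (at p)" for D
    using has_derivative_transform_within_open[OF _ assms(1,2), of f _ UNIV g]
      has_derivative_transform_within_open[OF _ assms(1,2), of g _ UNIV f] assms(3)
    by auto
  then show ?thesis unfolding frechet_derivative_def by simp
qed

lemma differentiable_transform_open: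
  assumes "open U" "p \<in> U" "\<And>q. q \<in> U \<Longrightarrow> f q = g q" "f differentiable (at p)"
  shows "g differentiable (at p)"
  using has_derivative_transform_within_open[OF _ assms(1,2), of f _ UNIV g] assms(3,4)
  by (auto simp: differentiable_def)

lemma frechet_derivative_eq_sum_pd:
  fixes f :: "real^'n \<Rightarrow> real"
  assumes "f differentiable (at p)"
  shows "frechet_derivative f (at p) v = (\<Sum>i\<in>UNIV. v$i * pd f i p)"
proof -
  have "frechet_derivative f (at p) v = frechet_derivative f (at p) (\<Sum>i\<in>UNIV. v$i *\<^sub>R axis i 1)"
    by (simp add: basis_expansion flip: scalar_mult_eq_scaleR)
  also have "\<dots> = (\<Sum>i\<in>UNIV. v$i * frechet_derivative f (at p) (axis i 1))"
    using linear_frechet_derivative[OF assms] by (simp add: linear_sum linear_scale)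
  finally show ?thesis by (simp add: pd_def)
qed

lemma frechet_derivative_add:
  assumes "f differentiable (at p)" "g differentiable (at p)"
  shows "frechet_derivative (\<lambda>x. f x + g x) (at p) h
    = frechet_derivative f (at p) h + frechet_derivative g (at p) h"
  using has_derivative_add[OF assms[unfolded frechet_derivative_works]]
  by (metis frechet_derivative_at)

lemma frechet_derivative_diff:
  assumes "f differentiable (at p)" "g differentiable (at p)"
  shows "frechet_derivative (\<lambda>x. f x - g x) (at p) h
    = frechet_derivative f (at p) h - frechet_derivative g (at p) h"
  using has_derivative_diff[OF assms[unfolded frechet_derivative_works]]
  by (metis frechet_derivative_at)

lemma frechet_derivative_minus:
  assumes "f differentiable (at p)"
  shows "frechet_derivative (\<lambda>x. - f x) (at p) h = - frechet_derivative f (at p) h"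
  using has_derivative_minus[OF assms[unfolded frechet_derivative_works]]
  by (metis frechet_derivative_at)

lemma frechet_derivative_scaleR:
  assumes "f differentiable (at p)"
  shows "frechet_derivative (\<lambda>x. c *\<^sub>R f x) (at p) h = c *\<^sub>R frechet_derivative f (at p) h"
  using has_derivative_scaleR_right[OF assms[unfolded frechet_derivative_works]]
  by (metis frechet_derivative_at)

lemma frechet_derivative_mult:
  fixes f g :: "'a::real_normed_vector \<Rightarrow> real"
  assumes "f differentiable (at p)" "g differentiable (at p)"
  shows "frechet_derivative (\<lambda>x. f x * g x) (at p) h
    = frechet_derivative f (at p) h * g p + f p * frechet_derivative g (at p) h"
  using has_derivative_mult[OF assms[unfolded frechet_derivative_works]]
  by (metis frechet_derivative_at add.commute)

lemma frechet_derivative_sum: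
  assumes "finite S" "\<And>i. i \<in> S \<Longrightarrow> f i differentiable (at p)"
  shows "frechet_derivative (\<lambda>x. \<Sum>i\<in>S. f i x) (at p) h = (\<Sum>i\<in>S. frechet_derivative (f i) (at p) h)"
proof -
  have "((\<lambda>x. \<Sum>i\<in>S. f i x) has_derivative (\<lambda>h. \<Sum>i\<in>S. frechet_derivative (f i) (at p) h)) (at p)"
    using assms by (intro has_derivative_sum) (auto simp: frechet_derivative_works)
  from frechet_derivative_at[OF this] show ?thesis by metis
qed

lemma differentiable_prod:
  fixes f :: "'i \<Rightarrow> 'a::real_normed_vector \<Rightarrow> real"
  assumes "finite S" "\<And>i. i \<in> S \<Longrightarrow> f i differentiable (at p)"
  shows "(\<lambda>x. \<Prod>i\<in>S. f i x) differentiable (at p)"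
proof -
  obtain F where "\<And>i. i \<in> S \<Longrightarrow> (f i has_derivative F i) (at p)"
    using assms(2) unfolding differentiable_def by metis
  then show ?thesis
    unfolding differentiable_def using has_derivative_prod[of S f F p UNIV] by blast
qed

lemma differentiable_matrix_vector_mult:
  fixes A :: "'a::real_normed_vector \<Rightarrow> real^'n^'m"
  assumes "A differentiable (at p)" "w differentiable (at p)"
  shows "(\<lambda>x. A x *v w x) differentiable (at p)"
  using assms unfolding differentiable_vec_nth_iff matrix_vector_mult_def by simp

lemma frechet_derivative_matrix_vector_mult:
  fixes A :: "'a::real_normed_vector \<Rightarrow> real^'n^'m"
  assumes A: "A differentiable (at p)" and w: "w differentiable (at p)"
  shows "frechet_derivative (\<lambda>x. A x *v w x) (at p) v
      = frechet_derivative A (at p) v *v w p + A p *v frechet_derivative w (at p) v"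
proof -
  have A': "(\<lambda>x. A x $ i $ j) differentiable (at p)" for i j
    using A by (simp add: differentiable_vec_nth_iff)
  have w': "(\<lambda>x. w x $ j) differentiable (at p)" for j
    using w differentiable_vec_nth_iff by blast
  have "frechet_derivative (\<lambda>x. A x *v w x) (at p) v $ i
      = (\<Sum>j\<in>UNIV. frechet_derivative (\<lambda>x. A x $ i $ j * w x $ j) (at p) v)" for i
    using frechet_derivative_vec_nth[OF differentiable_matrix_vector_mult[OF A w]]
    by (simp add: matrix_vector_mult_def frechet_derivative_sum A' w')
  then show ?thesis
    by (simp add: vec_eq_iff matrix_vector_mult_def frechet_derivative_mult A' w'
        frechet_derivative_mat_nth[OF A] frechet_derivative_vec_nth[OF w] sum.distrib)
qed

lemma differentiable_matrix_matrix_mult: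
  fixes A :: "'a::real_normed_vector \<Rightarrow> real^'n^'m" and B :: "'a \<Rightarrow> real^'k^'n"
  assumes "A differentiable (at p)" "B differentiable (at p)"
  shows "(\<lambda>x. A x ** B x) differentiable (at p)"
  using assms unfolding differentiable_vec_nth_iff matrix_matrix_mult_def by simp

lemma frechet_derivative_matrix_matrix_mult:
  fixes A :: "'a::real_normed_vector \<Rightarrow> real^'n^'m" and B :: "'a \<Rightarrow> real^'k^'n"
  assumes A: "A differentiable (at p)" and B: "B differentiable (at p)"
  shows "frechet_derivative (\<lambda>x. A x ** B x) (at p) v
      = frechet_derivative A (at p) v ** B p + A p ** frechet_derivative B (at p) v"
proof -
  have A': "(\<lambda>x. A x $ i $ j) differentiable (at p)" for i j
    using A by (simp add: differentiable_vec_nth_iff)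
  have B': "(\<lambda>x. B x $ j $ k) differentiable (at p)" for j k
    using B by (simp add: differentiable_vec_nth_iff)
  have "frechet_derivative (\<lambda>x. A x ** B x) (at p) v $ i $ k
      = (\<Sum>j\<in>UNIV. frechet_derivative (\<lambda>x. A x $ i $ j * B x $ j $ k) (at p) v)" for i k
    using frechet_derivative_mat_nth[OF differentiable_matrix_matrix_mult[OF A B]]
    by (simp add: matrix_matrix_mult_def frechet_derivative_sum A' B')
  then show ?thesis
    by (simp add: vec_eq_iff matrix_matrix_mult_def frechet_derivative_mult A' B'
        frechet_derivative_mat_nth[OF A] frechet_derivative_mat_nth[OF B] sum.distrib)
qed

lemma differentiable_det:
  fixes M :: "'a::real_normed_vector \<Rightarrow> real^'n^'n"
  assumes "\<And>i j. (\<lambda>x. M x $ i $ j) differentiable (at p)"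
  shows "(\<lambda>x. det (M x)) differentiable (at p)"
  unfolding det_def
  by (intro differentiable_sum differentiable_mult differentiable_prod ballI assms)
    (simp_all add: finite_permutations)

lemma matrix_inv_right:
  fixes A :: "real^'n^'n"
  assumes "invertible A"
  shows "A ** matrix_inv A = mat 1"
  using someI_ex[OF assms[unfolded invertible_def]] by (simp add: matrix_inv_def)

lemma matrix_inv_vector_cramer:
  fixes A :: "real^'n^'n"
  assumes "invertible A"
  shows "matrix_inv A *v w = (\<chi> k. det (\<chi> i j. if j = k then w$i else A$i$j) / det A)"
proof -
  have "A *v (matrix_inv A *v w) = w"
    using matrix_inv_right[OF assms] by (simp add: matrix_vector_mul_assoc)
  then show ?thesis using cramer invertible_det_nz assms by blast
qed

text \<open>By Cramer's rule the entries of \<open>matrix_inv M *v w\<close> are quotients of determinants.\<close>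

lemma differentiable_matrix_inv_vector:
  fixes M :: "real^'m::finite \<Rightarrow> real^'n^'n"
  assumes U: "open U" "p \<in> U" and inv: "\<And>q. q \<in> U \<Longrightarrow> invertible (M q)"
    and M: "M differentiable (at p)" and w: "w differentiable (at p)"
  shows "(\<lambda>q. matrix_inv (M q) *v w q) differentiable (at p)"
proof (rule differentiable_transform_open[OF U])
  let ?C = "\<lambda>q k. det (\<chi> i j. if j = k then w q $ i else M q $ i $ j)"
  show "(\<chi> k. ?C q k / det (M q)) = matrix_inv (M q) *v w q" if "q \<in> U" for q
    using matrix_inv_vector_cramer[OF inv[OF that]] by simp
  have M': "(\<lambda>x. M x $ i $ j) differentiable (at p)" for i j
    using M by (simp add: differentiable_vec_nth_iff)
  have w': "(\<lambda>x. w x $ i) differentiable (at p)" for i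
    using w differentiable_vec_nth_iff by blast
  have "(\<lambda>q. ?C q k) differentiable (at p)" for k
  proof (rule differentiable_det)
    show "(\<lambda>q. (\<chi> i j. if j = k then w q $ i else M q $ i $ j) $ i $ j) differentiable (at p)" for i j
      by (cases "j = k") (simp_all add: M' w')
  qed
  moreover have "(\<lambda>q. det (M q)) differentiable (at p)"
    by (rule differentiable_det[OF M'])
  moreover have "det (M p) \<noteq> 0"
    using inv[OF U(2)] invertible_det_nz by blast
  ultimately show "(\<lambda>q. \<chi> k. ?C q k / det (M q)) differentiable (at p)"
    unfolding differentiable_vec_nth_iff by simp
qed

section \<open>Smooth functions and fields\<close>

lemma cinf_differentiable: "cinf U f \<Longrightarrow> x \<in> U \<Longrightarrow> f differentiable (at x)"
  by (erule cinf.cases) auto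

lemma cinf_pd: "cinf U f \<Longrightarrow> cinf U (pd f i)"
  by (erule cinf.cases) auto

text \<open>Polynomial expressions in \<open>C\<^sup>\<infinity>\<close> functions are closed under \<open>pd\<close>, which makes them an
  invariant for the coinduction proving that they are \<open>C\<^sup>\<infinity>\<close>.\<close>

inductive cinf_poly :: "(real^'n::finite) set \<Rightarrow> (real^'n \<Rightarrow> real) \<Rightarrow> bool" for U where
  base: "cinf U f \<Longrightarrow> cinf_poly U f"
| const: "cinf_poly U (\<lambda>x. c)"
| add: "cinf_poly U f \<Longrightarrow> cinf_poly U g \<Longrightarrow> cinf_poly U (\<lambda>x. f x + g x)"
| mult: "cinf_poly U f \<Longrightarrow> cinf_poly U g \<Longrightarrow> cinf_poly U (\<lambda>x. f x * g x)"

lemma cinf_poly_differentiable: "cinf_poly U f \<Longrightarrow> x \<in> U \<Longrightarrow> f differentiable (at x)"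
  by (induction rule: cinf_poly.induct) (auto simp: cinf_differentiable)

lemma cinf_poly_pd:
  assumes "cinf_poly U f"
  shows "\<exists>f'. cinf_poly U f' \<and> (\<forall>x\<in>U. pd f i x = f' x)"
  using assms
proof (induction rule: cinf_poly.induct)
  case (base f)
  then show ?case using cinf_pd cinf_poly.base by blast
next
  case (const c)
  then show ?case by (intro exI[of _ "\<lambda>x. 0"]) (auto simp: pd_def intro: cinf_poly.const)
next
  case (add f g)
  then obtain f' g' where "cinf_poly U f'" "\<forall>x\<in>U. pd f i x = f' x"
    and "cinf_poly U g'" "\<forall>x\<in>U. pd g i x = g' x" by blast
  then show ?case
    by (intro exI[of _ "\<lambda>x. f' x + g' x"])
      (auto simp: pd_def frechet_derivative_add cinf_poly_differentiable[OF add.hyps(1)]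
        cinf_poly_differentiable[OF add.hyps(2)] intro: cinf_poly.add)
next
  case (mult f g)
  then obtain f' g' where "cinf_poly U f'" "\<forall>x\<in>U. pd f i x = f' x"
    and "cinf_poly U g'" "\<forall>x\<in>U. pd g i x = g' x" by blast
  then show ?case
    by (intro exI[of _ "\<lambda>x. f' x * g x + f x * g' x"])
      (auto simp: pd_def frechet_derivative_mult cinf_poly_differentiable[OF mult.hyps(1)]
        cinf_poly_differentiable[OF mult.hyps(2)] intro!: cinf_poly.add cinf_poly.mult mult.hyps)
qed

lemma cinf_if_eq_cinf_poly:
  assumes U: "open U" and "cinf_poly U g" "\<forall>x\<in>U. f x = g x"
  shows "cinf U f"
proof -
  have "\<exists>g. cinf_poly U g \<and> (\<forall>x\<in>U. f x = g x)" using assms by blast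
  then show ?thesis
  proof (coinduction arbitrary: f)
    case (cinf h)
    then obtain f where f: "cinf_poly U f" "\<forall>x\<in>U. h x = f x" by blast
    have "\<forall>x\<in>U. h differentiable (at x)"
    proof
      fix x assume x: "x \<in> U"
      show "h differentiable (at x)"
        by (rule differentiable_transform_open[OF U x, of f])
          (use f cinf_poly_differentiable[OF f(1) x] in auto)
    qed
    moreover have "\<exists>f'. cinf_poly U f' \<and> (\<forall>x\<in>U. pd h i x = f' x)" for i
    proof -
      obtain f' where f': "cinf_poly U f'" "\<forall>x\<in>U. pd f i x = f' x"
        using cinf_poly_pd[OF f(1)] by blast
      have "frechet_derivative h (at x) = frechet_derivative f (at x)" if "x \<in> U" for x
        by (rule frechet_derivative_cong_open[OF U that]) (use f(2) in blast)
      with f' show ?thesis by (auto simp: pd_def)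
    qed
    ultimately show ?case by auto
  qed
qed

lemma cinf_poly_sum:
  "finite S \<Longrightarrow> (\<And>i. i \<in> S \<Longrightarrow> cinf_poly U (f i)) \<Longrightarrow> cinf_poly U (\<lambda>x. \<Sum>i\<in>S. f i x)"
proof (induction S rule: finite_induct)
  case empty
  then show ?case using cinf_poly.const[of U 0] by simp
next
  case (insert a S)
  then show ?case using cinf_poly.add[of U "f a" "\<lambda>x. \<Sum>i\<in>S. f i x"] by simp
qed

lemma cinf_const: "open U \<Longrightarrow> cinf U (\<lambda>x. c)"
  by (rule cinf_if_eq_cinf_poly[OF _ cinf_poly.const]) auto

lemma cinf_sum_mult:
  fixes f g :: "'i::finite \<Rightarrow> real^'n::finite \<Rightarrow> real"
  assumes "open U" "\<And>j. cinf U (f j)" "\<And>j. cinf U (g j)"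
  shows "cinf U (\<lambda>x. \<Sum>j\<in>UNIV. f j x * g j x)"
proof (rule cinf_if_eq_cinf_poly[OF assms(1) cinf_poly_sum[of UNIV U "\<lambda>j x. f j x * g j x"]])
  show "cinf_poly U (\<lambda>x. f j x * g j x)" for j
    by (intro cinf_poly.mult cinf_poly.base assms)
qed simp_all

lemma smooth_vf_differentiable: "smooth_vf U X \<Longrightarrow> q \<in> U \<Longrightarrow> X differentiable (at q)"
  unfolding smooth_vf_def differentiable_vec_nth_iff using cinf_differentiable by blast

lemma smooth_mf_differentiable: "smooth_mf U A \<Longrightarrow> q \<in> U \<Longrightarrow> A differentiable (at q)"
  unfolding smooth_mf_def differentiable_vec_nth_iff using cinf_differentiable by blast

lemma smooth_vf_const: "open U \<Longrightarrow> smooth_vf U (\<lambda>x. v)"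
  unfolding smooth_vf_def by (auto intro!: cinf_const)

lemma smooth_vf_app:
  assumes "open U" "smooth_mf U J" "smooth_vf U X"
  shows "smooth_vf U (app J X)"
  using assms unfolding smooth_vf_def smooth_mf_def app_def matrix_vector_mult_def
  by (auto intro: cinf_sum_mult)

lemma differentiable_frechet_derivative_cinf:
  assumes U: "open U" and f: "cinf U f" and p: "p \<in> U" and u: "u differentiable (at p)"
  shows "(\<lambda>q. frechet_derivative f (at q) (u q)) differentiable (at p)"
proof (rule differentiable_transform_open[OF U p])
  show "(\<Sum>m\<in>UNIV. u q $ m * pd f m q) = frechet_derivative f (at q) (u q)" if "q \<in> U" for q
    using frechet_derivative_eq_sum_pd[OF cinf_differentiable[OF f that]] by simp
  have "(\<lambda>x. u x $ m) differentiable (at p)" "pd f m differentiable (at p)" for m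
    using u differentiable_vec_nth_iff cinf_differentiable[OF cinf_pd[OF f] p] by blast+
  then show "(\<lambda>q. \<Sum>m\<in>UNIV. u q $ m * pd f m q) differentiable (at p)"
    by simp
qed

lemma differentiable_frechet_derivative_vf:
  assumes U: "open U" and Z: "smooth_vf U Z" and p: "p \<in> U" and u: "u differentiable (at p)"
  shows "(\<lambda>q. frechet_derivative Z (at q) (u q)) differentiable (at p)"
proof (rule differentiable_transform_open[OF U p])
  show "(\<chi> j. frechet_derivative (\<lambda>x. Z x $ j) (at q) (u q)) = frechet_derivative Z (at q) (u q)"
    if "q \<in> U" for q
    using frechet_derivative_vec_nth[OF smooth_vf_differentiable[OF Z that]] by (simp add: vec_eq_iff)
  have "(\<lambda>q. frechet_derivative (\<lambda>x. Z x $ j) (at q) (u q)) differentiable (at p)" for j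
    using Z by (intro differentiable_frechet_derivative_cinf[OF U _ p u]) (simp add: smooth_vf_def)
  then show "(\<lambda>q. \<chi> j. frechet_derivative (\<lambda>x. Z x $ j) (at q) (u q)) differentiable (at p)"
    by (subst differentiable_vec_nth_iff) simp
qed

lemma differentiable_frechet_derivative_mf:
  assumes U: "open U" and A: "smooth_mf U A" and p: "p \<in> U" and u: "u differentiable (at p)"
  shows "(\<lambda>q. frechet_derivative A (at q) (u q)) differentiable (at p)"
proof (rule differentiable_transform_open[OF U p])
  show "(\<chi> i. frechet_derivative (\<lambda>x. A x $ i) (at q) (u q)) = frechet_derivative A (at q) (u q)"
    if "q \<in> U" for q
    using frechet_derivative_vec_nth[OF smooth_mf_differentiable[OF A that]] by (simp add: vec_eq_iff)
  have "smooth_vf U (\<lambda>x. A x $ i)" for i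
    using A by (simp add: smooth_mf_def smooth_vf_def)
  then have "(\<lambda>q. frechet_derivative (\<lambda>x. A x $ i) (at q) (u q)) differentiable (at p)" for i
    using differentiable_frechet_derivative_vf[OF U _ p u] by blast
  then show "(\<lambda>q. \<chi> i. frechet_derivative (\<lambda>x. A x $ i) (at q) (u q)) differentiable (at p)"
    by (subst differentiable_vec_nth_iff) simp
qed

section \<open>Bilinear forms of matrices\<close>

lemma bil_expand: "bil A u v = (\<Sum>j\<in>UNIV. \<Sum>k\<in>UNIV. u$j * A$j$k * v$k)"
  by (simp add: bil_def inner_vec_def matrix_vector_mult_def sum_distrib_left mult.assoc)

lemma bil_add_left: "bil A (u + u') v = bil A u v + bil A u' v"
  by (simp add: bil_def inner_add_left)
lemma bil_add_right: "bil A u (v + v') = bil A u v + bil A u v'"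
  by (simp add: bil_def inner_add_right matrix_vector_right_distrib)
lemma bil_add_matrix: "bil (A + B) u v = bil A u v + bil B u v"
  by (simp add: bil_def inner_add_right matrix_vector_mult_add_rdistrib)
lemma bil_diff_left: "bil A (u - u') v = bil A u v - bil A u' v"
  by (simp add: bil_def inner_diff_left)
lemma bil_diff_right: "bil A u (v - v') = bil A u v - bil A u v'"
  by (simp add: bil_def inner_diff_right matrix_vector_mult_diff_distrib)
lemma bil_diff_matrix: "bil (A - B) u v = bil A u v - bil B u v"
  by (simp add: bil_def inner_diff_right matrix_vector_mult_diff_rdistrib)
lemma bil_minus_left: "bil A (- u) v = - bil A u v"
  by (simp add: bil_def)
lemma bil_minus_right: "bil A u (- v) = - bil A u v"
  by (simp add: bil_expand sum_negf)
lemma bil_minus_matrix: "bil (- A) u v = - bil A u v"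
  by (simp add: bil_expand sum_negf)
lemma bil_scaleR_left: "bil A (c *\<^sub>R u) v = c * bil A u v"
  by (simp add: bil_def)
lemma bil_scaleR_right: "bil A u (c *\<^sub>R v) = c * bil A u v"
  by (simp add: bil_def matrix_vector_mult_scaleR)
lemma bil_scaleR_matrix: "bil (c *\<^sub>R A) u v = c * bil A u v"
  by (simp add: bil_expand sum_distrib_left mult.assoc mult.left_commute)
lemma bil_zero_left: "bil A 0 v = 0" by (simp add: bil_def)
lemma bil_zero_right: "bil A u 0 = 0" by (simp add: bil_def)
lemma bil_zero_matrix: "bil 0 u v = 0" by (simp add: bil_def)

lemmas bil_linear_simps = bil_add_left bil_add_right bil_add_matrix bil_diff_left bil_diff_right
  bil_diff_matrix bil_minus_left bil_minus_right bil_minus_matrix bil_scaleR_left bil_scaleR_right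
  bil_scaleR_matrix bil_zero_left bil_zero_right bil_zero_matrix

lemma bil_sum_matrix: "bil (sum f S) u v = (\<Sum>i\<in>S. bil (f i) u v)"
proof (cases "finite S")
  case True
  then show ?thesis by (induction S rule: finite_induct) (simp_all add: bil_linear_simps)
qed (simp add: bil_zero_matrix)

lemma bil_transpose: "bil A u v = bil (transpose A) v u"
proof -
  have "bil A u v = (u v* A) \<bullet> v" by (simp add: bil_def dot_lmul_matrix)
  also have "\<dots> = bil (transpose A) v u" by (simp add: bil_def inner_commute)
  finally show ?thesis .
qed

lemma bil_skew: "transpose A = - A \<Longrightarrow> bil A u v = - bil A v u"
  using bil_transpose[of A u v] by (simp add: bil_minus_matrix)

lemma bil_matrix_matrix_mult: "bil (A ** B) u v = bil A u (B *v v)"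
  by (simp add: bil_def matrix_vector_mul_assoc)

lemma bil_axis_right: "bil A u (axis k 1) = (\<Sum>j\<in>UNIV. u$j * A$j$k)"
  by (simp add: bil_def matrix_vector_mult_def axis_def inner_vec_def if_distrib cong: if_cong)

lemma bil_eq_sum_axis_right: "bil A u v = (\<Sum>l\<in>UNIV. v$l * bil A u (axis l 1))"
proof -
  have "bil A u v = (\<Sum>j\<in>UNIV. \<Sum>l\<in>UNIV. v$l * (u$j * A$j$l))"
    by (simp add: bil_expand ac_simps)
  also have "\<dots> = (\<Sum>l\<in>UNIV. \<Sum>j\<in>UNIV. v$l * (u$j * A$j$l))"
    by (rule sum.swap)
  finally show ?thesis by (simp add: bil_axis_right sum_distrib_left)
qed

lemma bil_linear_eq_sum_axis:
  assumes "linear L"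
  shows "bil (L x) u v = (\<Sum>i\<in>UNIV. x$i * bil (L (axis i 1)) u v)"
proof -
  have "L x = L (\<Sum>i\<in>UNIV. x$i *\<^sub>R axis i 1)"
    using basis_expansion[of x] by (simp add: scalar_mult_eq_scaleR)
  also have "\<dots> = (\<Sum>i\<in>UNIV. x$i *\<^sub>R L (axis i 1))"
    using assms by (simp add: linear_sum linear_scale)
  finally show ?thesis by (simp add: bil_sum_matrix bil_scaleR_matrix)
qed

lemma bil_linear_expand:
  assumes "linear L"
  shows "bil (L x) u v = (\<Sum>i\<in>UNIV. \<Sum>j\<in>UNIV. \<Sum>k\<in>UNIV. x$i * u$j * v$k * L (axis i 1) $ j $ k)"
  using bil_linear_eq_sum_axis[OF assms, of x u v] by (simp add: bil_expand sum_distrib_left ac_simps)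

lemma matrix_vector_mult_uminus_left: "(- A) *v v = - (A *v (v::real^'n))"
  by (simp add: matrix_vector_mult_def vec_eq_iff sum_negf)

lemma matrix_mul_uminus_left: "(- A) ** B = - (A ** (B::real^'n^'m))"
  by (simp add: matrix_matrix_mult_def vec_eq_iff sum_negf)

lemma matrix_mul_uminus_right: "A ** (- B) = - (A ** (B::real^'n^'m))"
  by (simp add: matrix_matrix_mult_def vec_eq_iff sum_negf)

lemma differentiable_bil:
  fixes A :: "'a::real_normed_vector \<Rightarrow> real^'n^'n"
  assumes A: "A differentiable (at p)" and u: "u differentiable (at p)" and v: "v differentiable (at p)"
  shows "(\<lambda>x. bil (A x) (u x) (v x)) differentiable (at p)"
proof -
  have "(\<lambda>x. (A x *v v x) $ i) differentiable (at p)" for i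
    using differentiable_matrix_vector_mult[OF A v] unfolding differentiable_vec_nth_iff by blast
  moreover have "(\<lambda>x. u x $ i) differentiable (at p)" for i
    using u unfolding differentiable_vec_nth_iff by blast
  ultimately show ?thesis
    unfolding bil_def inner_vec_def by simp
qed

section \<open>Almost Kaehler structures\<close>

text \<open>The difference \<open>D x u v = A (j x) u v - A x u (j v)\<close> is invariant under cyclic permutations and
  skew in its last two arguments, hence totally skew; it then satisfies both
  \<open>D (j a) b c = - D a b (j c)\<close> and \<open>D (j a) b c = D a b (j c)\<close>.\<close>

lemma cyclic_skew_form_J_shift:
  fixes A :: "'v::ab_group_add \<Rightarrow> 'v \<Rightarrow> 'v \<Rightarrow> real" and j :: "'v \<Rightarrow> 'v"
  assumes cyclic: "\<And>x u v. A x u v + A u v x + A v x u = 0"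
    and skew: "\<And>x u v. A x u v = - A x v u"
    and J_shift: "\<And>x u v. A x (j u) v = A x u (j v)"
    and jj: "\<And>v. j (j v) = - v"
    and minus: "\<And>x u v. A x u (- v) = - A x u v"
  shows "A (j x) u v = A x u (j v)"
proof -
  have minus_mid: "A x (- u) v = - A x u v" for x u v
    using skew[of x "- u" v] minus[of x v u] skew[of x v u] by simp
  have minus_first: "A (- x) u v = - A x u v" for x u v
    using cyclic[of "- x" u v] cyclic[of x u v] minus[of u v x] minus_mid[of v x u] by linarith
  define D where "D x u v = A (j x) u v - A x u (j v)" for x u v
  have D_cyclic: "D x u v = D v x u" for x u v
    unfolding D_def using cyclic[of "j x" u v] cyclic[of x u "j v"] J_shift[of u v x] J_shift[of v x u]
    by linarith
  have D_skew: "D x u v = - D x v u" for x u v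
    unfolding D_def using skew[of "j x" u v] skew[of x v "j u"] J_shift[of x v u] skew[of x u "j v"]
    by linarith
  have D_j: "D (j x) u v = - D x u (j v)" for x u v
    unfolding D_def by (simp add: jj minus_first minus)
  have D_swap: "D u x v = - D x u v" for x u v
    using D_cyclic[of u x v] D_skew[of v u x] D_cyclic[of x u v] by linarith
  have D_j_0: "D (j a) b c = 0" for a b c
  proof -
    have "D a (j b) c = - D a b (j c)"
      using D_swap[of a "j b" c] D_j[of b a c] D_swap[of b a "j c"] by linarith
    moreover have "D a (j b) c = - D (j a) b c"
      using D_cyclic[of "j b" c a] D_j[of b c a] D_cyclic[of b c "j a"] by linarith
    ultimately show ?thesis using D_j[of a b c] by linarith
  qed
  have "D x u v = 0"
    using D_j_0[of "j (- x)" u v] jj[of "- x"] by simp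
  then show ?thesis unfolding D_def by simp
qed

locale almost_kahler_chart =
  fixes U :: "(real^'n::finite) set" and g J \<kappa> :: "real^'n \<Rightarrow> real^'n^'n"
  assumes almost_kahler: "almost_kahler U g J \<kappa>"
begin

lemma open_U: "open U"
  and smooth_g: "smooth_mf U g" and smooth_J: "smooth_mf U J" and smooth_kappa: "smooth_mf U \<kappa>"
  using almost_kahler unfolding almost_kahler_def by blast+

context
  fixes p assumes p: "p \<in> U"
begin

lemma J_squared: "J p ** J p = - mat 1"
  and kappa_skew: "transpose (\<kappa> p) = - \<kappa> p"
  and invertible_kappa: "invertible (\<kappa> p)"
  and g_eq_kappa_J: "g p = \<kappa> p ** J p"
  and g_symmetric: "transpose (g p) = g p"
  and g_J_invariant: "transpose (J p) ** g p ** J p = g p"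
  using almost_kahler p unfolding almost_kahler_def by blast+

lemma kappa_closed:
  "frechet_derivative \<kappa> (at p) (axis i 1) $ j $ k + frechet_derivative \<kappa> (at p) (axis j 1) $ k $ i
    + frechet_derivative \<kappa> (at p) (axis k 1) $ i $ j = 0"
  using almost_kahler p unfolding almost_kahler_def by blast

lemma g_pos: "v \<noteq> 0 \<Longrightarrow> bil (g p) v v > 0"
  using almost_kahler p unfolding almost_kahler_def by blast

lemma g_differentiable: "g differentiable (at p)"
  and J_differentiable: "J differentiable (at p)"
  and kappa_differentiable: "\<kappa> differentiable (at p)"
  using smooth_g smooth_J smooth_kappa smooth_mf_differentiable p by blast+

lemma J_J_apply: "J p *v (J p *v v) = - v"
  by (simp add: matrix_vector_mul_assoc J_squared matrix_vector_mult_uminus_left)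

lemma invertible_g: "invertible (g p)"
proof -
  have "invertible (J p)"
    unfolding invertible_def
    by (rule exI[of _ "- J p"]) (simp add: matrix_mul_uminus_left matrix_mul_uminus_right J_squared)
  then show ?thesis using g_eq_kappa_J invertible_kappa invertible_mult by metis
qed

lemma g_commute: "bil (g p) u v = bil (g p) v u"
  using bil_transpose g_symmetric by metis

lemma g_J_J: "bil (g p) (J p *v u) (J p *v v) = bil (g p) u v"
proof -
  have "bil (g p) u v = bil (transpose (J p) ** g p ** J p) u v" using g_J_invariant by simp
  also have "\<dots> = bil (transpose (J p)) u (g p *v (J p *v v))" by (simp add: bil_matrix_matrix_mult)
  also have "\<dots> = bil (J p) (g p *v (J p *v v)) u" by (metis bil_transpose transpose_transpose)
  also have "\<dots> = bil (g p) (J p *v u) (J p *v v)" by (simp add: bil_def inner_commute)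
  finally show ?thesis by simp
qed

lemma g_J_left: "bil (g p) (J p *v u) v = - bil (g p) u (J p *v v)"
  using g_J_J[of u "J p *v (- v)"] by (simp add: J_J_apply vec.neg bil_minus_right)

lemma g_self_eq_0_iff: "bil (g p) v v = 0 \<longleftrightarrow> v = 0"
  using g_pos by (force simp: bil_zero_left)

end

lemma transpose_dg:
  assumes p: "p \<in> U"
  shows "transpose (frechet_derivative g (at p) x) = frechet_derivative g (at p) x"
proof -
  have "frechet_derivative (\<lambda>q. g q $ j $ i) (at p) = frechet_derivative (\<lambda>q. g q $ i $ j) (at p)" for i j
  proof (rule frechet_derivative_cong_open[OF open_U p])
    show "g q $ j $ i = g q $ i $ j" if "q \<in> U" for q
      using g_symmetric[OF that] by (simp add: transpose_def vec_eq_iff)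
  qed
  then show ?thesis
    by (simp add: vec_eq_iff transpose_def frechet_derivative_mat_nth[OF g_differentiable[OF p]])
qed

lemma transpose_dkappa:
  assumes p: "p \<in> U"
  shows "transpose (frechet_derivative \<kappa> (at p) x) = - frechet_derivative \<kappa> (at p) x"
proof -
  have "transpose (frechet_derivative \<kappa> (at p) x) $ i $ j = - frechet_derivative \<kappa> (at p) x $ i $ j"
    for i j
  proof -
    have "frechet_derivative (\<lambda>q. \<kappa> q $ j $ i) (at p) = frechet_derivative (\<lambda>q. - \<kappa> q $ i $ j) (at p)"
    proof (rule frechet_derivative_cong_open[OF open_U p])
      show "\<kappa> q $ j $ i = - \<kappa> q $ i $ j" if "q \<in> U" for q
        using arg_cong[OF kappa_skew[OF that], of "\<lambda>A. A $ i $ j"] by (simp add: transpose_def)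
    qed
    moreover have "(\<lambda>q. \<kappa> q $ i $ j) differentiable (at p)"
      using kappa_differentiable[OF p] by (simp add: differentiable_vec_nth_iff)
    ultimately show ?thesis
      unfolding transpose_def frechet_derivative_mat_nth[OF kappa_differentiable[OF p]]
      by (simp add: frechet_derivative_minus)
  qed
  then show ?thesis by (simp add: vec_eq_iff)
qed

lemma dJ_anticommute:
  assumes p: "p \<in> U"
  shows "frechet_derivative J (at p) x ** J p = - (J p ** frechet_derivative J (at p) x)"
proof -
  have "frechet_derivative (\<lambda>q. J q ** J q) (at p) = frechet_derivative (\<lambda>q. - mat 1) (at p)"
    by (rule frechet_derivative_cong_open[OF open_U p]) (simp add: J_squared)
  then have "frechet_derivative (\<lambda>q. J q ** J q) (at p) x = 0" by simp
  then show ?thesis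
    by (simp add: frechet_derivative_matrix_matrix_mult[OF J_differentiable[OF p] J_differentiable[OF p]]
        eq_neg_iff_add_eq_0)
qed

lemma kappa_eq_g_J:
  assumes p: "p \<in> U"
  shows "\<kappa> p = - (g p ** J p)"
  by (simp add: g_eq_kappa_J[OF p] J_squared[OF p] matrix_mul_uminus_right flip: matrix_mul_assoc)

lemma dkappa_eq:
  assumes p: "p \<in> U"
  shows "frechet_derivative \<kappa> (at p) x
    = - (frechet_derivative g (at p) x ** J p + g p ** frechet_derivative J (at p) x)"
proof -
  have "frechet_derivative \<kappa> (at p) = frechet_derivative (\<lambda>q. - (g q ** J q)) (at p)"
    by (rule frechet_derivative_cong_open[OF open_U p]) (simp add: kappa_eq_g_J)
  then show ?thesis
    using g_differentiable[OF p] J_differentiable[OF p]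
    by (simp add: frechet_derivative_minus differentiable_matrix_matrix_mult
        frechet_derivative_matrix_matrix_mult)
qed

text \<open>Closedness of \<open>\<kappa>\<close> is assumed on coordinate vectors only; trilinearity extends it.\<close>

lemma dkappa_cyclic:
  assumes p: "p \<in> U"
  shows "bil (frechet_derivative \<kappa> (at p) x) u v + bil (frechet_derivative \<kappa> (at p) u) v x
       + bil (frechet_derivative \<kappa> (at p) v) x u = 0"
proof -
  define c where "c i j k = frechet_derivative \<kappa> (at p) (axis i 1) $ j $ k" for i j k
  have L: "linear (frechet_derivative \<kappa> (at p))"
    using linear_frechet_derivative[OF kappa_differentiable[OF p]] .
  have S1: "bil (frechet_derivative \<kappa> (at p) x) u v
      = (\<Sum>a\<in>UNIV. \<Sum>b\<in>UNIV. \<Sum>d\<in>UNIV. x$a * u$b * v$d * c a b d)"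
    unfolding bil_linear_expand[OF L] c_def ..
  have "bil (frechet_derivative \<kappa> (at p) u) v x
      = (\<Sum>b\<in>UNIV. \<Sum>d\<in>UNIV. \<Sum>a\<in>UNIV. u$b * v$d * x$a * c b d a)"
    unfolding bil_linear_expand[OF L] c_def ..
  also have "\<dots> = (\<Sum>a\<in>UNIV. \<Sum>b\<in>UNIV. \<Sum>d\<in>UNIV. u$b * v$d * x$a * c b d a)"
    by (subst sum.swap) (rule sum.cong[OF refl], rule sum.swap)
  finally have S2: "bil (frechet_derivative \<kappa> (at p) u) v x
      = (\<Sum>a\<in>UNIV. \<Sum>b\<in>UNIV. \<Sum>d\<in>UNIV. x$a * u$b * v$d * c b d a)"
    by (simp add: mult.commute mult.left_commute)
  have "bil (frechet_derivative \<kappa> (at p) v) x u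
      = (\<Sum>d\<in>UNIV. \<Sum>a\<in>UNIV. \<Sum>b\<in>UNIV. v$d * x$a * u$b * c d a b)"
    unfolding bil_linear_expand[OF L] c_def ..
  also have "\<dots> = (\<Sum>a\<in>UNIV. \<Sum>b\<in>UNIV. \<Sum>d\<in>UNIV. v$d * x$a * u$b * c d a b)"
    by (subst sum.swap) (rule sum.cong[OF refl], rule sum.swap)
  finally have S3: "bil (frechet_derivative \<kappa> (at p) v) x u
      = (\<Sum>a\<in>UNIV. \<Sum>b\<in>UNIV. \<Sum>d\<in>UNIV. x$a * u$b * v$d * c d a b)"
    by (simp add: mult.commute mult.left_commute)
  have "c a b d + c b d a + c d a b = 0" for a b d
    unfolding c_def using kappa_closed[OF p] by blast
  then have "(\<Sum>a\<in>UNIV. \<Sum>b\<in>UNIV. \<Sum>d\<in>UNIV. x$a * u$b * v$d * c a b d)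
      + (\<Sum>a\<in>UNIV. \<Sum>b\<in>UNIV. \<Sum>d\<in>UNIV. x$a * u$b * v$d * c b d a)
      + (\<Sum>a\<in>UNIV. \<Sum>b\<in>UNIV. \<Sum>d\<in>UNIV. x$a * u$b * v$d * c d a b) = 0"
    by (simp add: sum.distrib[symmetric] distrib_left[symmetric])
  then show ?thesis using S1 S2 S3 by simp
qed

section \<open>The Levi-Civita connection and the covariant derivative of \<open>J\<close>\<close>

definition christoffel1 :: "real^'n \<Rightarrow> real^'n \<Rightarrow> real^'n \<Rightarrow> real^'n" where
  "christoffel1 p u v = (\<chi> l.
      (bil (frechet_derivative g (at p) u) v (axis l 1)
     + bil (frechet_derivative g (at p) v) u (axis l 1)
     - bil (frechet_derivative g (at p) (axis l 1)) u v) / 2)"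

lemma christoffel_eq: "christoffel g p u v = matrix_inv (g p) *v christoffel1 p u v"
  by (simp add: christoffel_def christoffel1_def)

lemma g_christoffel: "p \<in> U \<Longrightarrow> g p *v christoffel g p u v = christoffel1 p u v"
  by (simp add: christoffel_eq matrix_vector_mul_assoc matrix_inv_right invertible_g)

lemma christoffel_commute:
  assumes p: "p \<in> U"
  shows "christoffel g p u v = christoffel g p v u"
proof -
  have "bil (frechet_derivative g (at p) e) u v = bil (frechet_derivative g (at p) e) v u" for e
    using bil_transpose transpose_dg[OF p] by metis
  then show ?thesis by (simp add: christoffel_eq christoffel1_def add.commute)
qed

lemma linear_christoffel:
  assumes p: "p \<in> U"
  shows "linear (christoffel g p u)"
proof -
  have "linear (christoffel1 p u)"
    using linear_frechet_derivative[OF g_differentiable[OF p]]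
    by (intro linearI) (simp_all add: christoffel1_def vec_eq_iff linear_add linear_scale
        bil_linear_simps add_divide_distrib diff_divide_distrib algebra_simps)
  moreover have "christoffel g p u = (*v) (matrix_inv (g p)) \<circ> christoffel1 p u"
    by (simp add: fun_eq_iff christoffel_eq)
  ultimately show ?thesis using linear_compose matrix_vector_mul_linear by metis
qed

lemmas christoffel_add = linear_add[OF linear_christoffel]
  and christoffel_diff = linear_diff[OF linear_christoffel]
  and christoffel_minus = linear_neg[OF linear_christoffel]
  and christoffel_scaleR = linear_scale[OF linear_christoffel]

lemma dg_eq_christoffel:
  assumes p: "p \<in> U"
  shows "bil (frechet_derivative g (at p) x) a b
       = bil (g p) (christoffel g p x a) b + bil (g p) a (christoffel g p x b)"
proof -
  let ?d = "frechet_derivative g (at p)"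
  have L: "linear ?d" using linear_frechet_derivative[OF g_differentiable[OF p]] .
  have sym: "bil (?d y) s t = bil (?d y) t s" for y s t
    using bil_transpose transpose_dg[OF p] by metis
  have half: "bil (g p) (christoffel g p x a) b
        = (bil (?d x) a b + bil (?d a) x b - bil (?d b) x a) / 2" for x a b
  proof -
    have "bil (g p) (christoffel g p x a) b = bil (g p) b (christoffel g p x a)"
      by (rule g_commute[OF p])
    also have "\<dots> = b \<bullet> christoffel1 p x a"
      by (simp add: bil_def g_christoffel[OF p])
    also have "\<dots> = (\<Sum>l\<in>UNIV. b$l * bil (?d x) a (axis l 1)
                     + b$l * bil (?d a) x (axis l 1) - b$l * bil (?d (axis l 1)) x a) / 2"
      by (simp add: inner_vec_def christoffel1_def sum_divide_distrib algebra_simps)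
    also have "\<dots> = (bil (?d x) a b + bil (?d a) x b - bil (?d b) x a) / 2"
      by (simp add: sum.distrib sum_subtractf bil_eq_sum_axis_right[of _ _ b]
          bil_linear_eq_sum_axis[OF L, of b])
    finally show ?thesis .
  qed
  show ?thesis
    unfolding g_commute[OF p, of a] half using sym[of x a b] sym[of a x b] sym[of b x a]
    by (simp add: field_simps)
qed

text \<open>\<open>nablaJ p x w\<close> is \<open>(\<nabla>\<^sub>x J) w\<close> at \<open>p\<close>.\<close>

definition nablaJ :: "real^'n \<Rightarrow> real^'n \<Rightarrow> real^'n \<Rightarrow> real^'n" where
  "nablaJ p x w = frechet_derivative J (at p) x *v w + christoffel g p x (J p *v w)
    - J p *v christoffel g p x w"

lemma linear_nablaJ:
  assumes p: "p \<in> U"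
  shows "linear (nablaJ p x)"
  by (intro linearI) (simp_all add: nablaJ_def christoffel_add[OF p] christoffel_scaleR[OF p]
      matrix_vector_right_distrib matrix_vector_mult_scaleR algebra_simps)

lemmas nablaJ_add = linear_add[OF linear_nablaJ]
  and nablaJ_minus = linear_neg[OF linear_nablaJ]

lemma nablaJ_J:
  assumes p: "p \<in> U"
  shows "nablaJ p x (J p *v w) = - (J p *v nablaJ p x w)"
proof -
  let ?dJ = "frechet_derivative J (at p) x" and ?G = "christoffel g p x"
  have "nablaJ p x (J p *v w) = (?dJ ** J p) *v w - ?G w - J p *v ?G (J p *v w)"
    by (simp add: nablaJ_def J_squared[OF p] matrix_vector_mult_uminus_left christoffel_minus[OF p]
        matrix_vector_mul_assoc)
  also have "\<dots> = - ((J p ** ?dJ) *v w) - ?G w - J p *v ?G (J p *v w)"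
    by (simp add: dJ_anticommute[OF p] matrix_vector_mult_uminus_left)
  also have "\<dots> = - (J p *v nablaJ p x w)"
    by (simp add: nablaJ_def matrix_vector_right_distrib matrix_vector_mult_diff_distrib
        J_squared[OF p] matrix_vector_mult_uminus_left matrix_vector_mul_assoc)
  finally show ?thesis .
qed

text \<open>\<open>nabla_kappa p x u v\<close> is \<open>(\<nabla>\<^sub>x \<kappa>)(u, v)\<close> at \<open>p\<close>.\<close>

definition nabla_kappa :: "real^'n \<Rightarrow> real^'n \<Rightarrow> real^'n \<Rightarrow> real^'n \<Rightarrow> real" where
  "nabla_kappa p x u v = bil (frechet_derivative \<kappa> (at p) x) u v
     - bil (\<kappa> p) (christoffel g p x u) v - bil (\<kappa> p) u (christoffel g p x v)"

lemma nabla_kappa_skew: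
  assumes p: "p \<in> U"
  shows "nabla_kappa p x u v = - nabla_kappa p x v u"
  using bil_skew[OF transpose_dkappa[OF p], of x u v]
    bil_skew[OF kappa_skew[OF p], of "christoffel g p x u" v]
    bil_skew[OF kappa_skew[OF p], of u "christoffel g p x v"]
  unfolding nabla_kappa_def by linarith

text \<open>Torsion-freeness turns \<open>d\<kappa> = 0\<close> into the vanishing of the cyclic sum of \<open>\<nabla>\<kappa>\<close>.\<close>

lemma nabla_kappa_cyclic:
  assumes p: "p \<in> U"
  shows "nabla_kappa p x u v + nabla_kappa p u v x + nabla_kappa p v x u = 0"
proof -
  have skew: "bil (\<kappa> p) a b = - bil (\<kappa> p) b a" for a b
    by (rule bil_skew[OF kappa_skew[OF p]])
  have "bil (\<kappa> p) v (christoffel g p u x) = - bil (\<kappa> p) (christoffel g p x u) v"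
    and "bil (\<kappa> p) (christoffel g p v x) u = - bil (\<kappa> p) u (christoffel g p x v)"
    and "bil (\<kappa> p) x (christoffel g p v u) = - bil (\<kappa> p) (christoffel g p u v) x"
    using skew christoffel_commute[OF p] by metis+
  then show ?thesis
    unfolding nabla_kappa_def using dkappa_cyclic[OF p, of x u v] by linarith
qed

lemma nabla_kappa_eq_nablaJ:
  assumes p: "p \<in> U"
  shows "nabla_kappa p x u v = - bil (g p) u (nablaJ p x v)"
proof -
  let ?dg = "frechet_derivative g (at p) x" and ?dJ = "frechet_derivative J (at p) x"
  let ?G = "christoffel g p x"
  have "nabla_kappa p x u v = - bil ?dg u (J p *v v) - bil (g p) u (?dJ *v v)
        + bil (g p) (?G u) (J p *v v) + bil (g p) u (J p *v ?G v)"
    unfolding nabla_kappa_def dkappa_eq[OF p] kappa_eq_g_J[OF p]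
    by (simp add: bil_linear_simps bil_matrix_matrix_mult)
  also have "\<dots> = - bil (g p) u (nablaJ p x v)"
    by (simp add: dg_eq_christoffel[OF p] nablaJ_def bil_add_right bil_diff_right)
  finally show ?thesis .
qed

lemma g_nablaJ_eq_nabla_kappa:
  assumes p: "p \<in> U"
  shows "bil (g p) (nablaJ p x u) v = nabla_kappa p x u v"
  using nabla_kappa_eq_nablaJ[OF p, of x v u] nabla_kappa_skew[OF p, of x v u] g_commute[OF p]
  by simp

lemma g_nablaJ_skew: "p \<in> U \<Longrightarrow> bil (g p) (nablaJ p x u) v = - bil (g p) (nablaJ p x v) u"
  using g_nablaJ_eq_nabla_kappa nabla_kappa_skew by metis

lemma g_nablaJ_cyclic: "p \<in> U \<Longrightarrow>
  bil (g p) (nablaJ p x u) v + bil (g p) (nablaJ p u v) x + bil (g p) (nablaJ p v x) u = 0"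
  using g_nablaJ_eq_nabla_kappa nabla_kappa_cyclic by metis

lemma g_nablaJ_J: "p \<in> U \<Longrightarrow>
  bil (g p) (nablaJ p x (J p *v u)) v = bil (g p) (nablaJ p x u) (J p *v v)"
  using g_J_left by (simp add: nablaJ_J bil_minus_left)

lemma nablaJ_J_direction:
  assumes p: "p \<in> U"
  shows "nablaJ p (J p *v x) u = - (J p *v nablaJ p x u)"
proof -
  have shift: "bil (g p) (nablaJ p (J p *v x) u) v = bil (g p) (nablaJ p x u) (J p *v v)" for v
  proof (rule cyclic_skew_form_J_shift[of "\<lambda>x u v. bil (g p) (nablaJ p x u) v" "\<lambda>v. J p *v v"])
    show "bil (g p) (nablaJ p x u) v + bil (g p) (nablaJ p u v) x + bil (g p) (nablaJ p v x) u = 0"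
      for x u v by (rule g_nablaJ_cyclic[OF p])
    show "bil (g p) (nablaJ p x u) v = - bil (g p) (nablaJ p x v) u" for x u v
      by (rule g_nablaJ_skew[OF p])
    show "bil (g p) (nablaJ p x (J p *v u)) v = bil (g p) (nablaJ p x u) (J p *v v)" for x u v
      by (rule g_nablaJ_J[OF p])
    show "J p *v (J p *v v) = - v" for v
      by (rule J_J_apply[OF p])
    show "bil (g p) (nablaJ p x u) (- v) = - bil (g p) (nablaJ p x u) v" for x u v
      by (rule bil_minus_right)
  qed
  have "bil (g p) (nablaJ p (J p *v x) u + J p *v nablaJ p x u) v = 0" for v
    using shift[of v] g_J_left[OF p, of "nablaJ p x u" v] by (simp add: bil_add_left)
  then have "nablaJ p (J p *v x) u + J p *v nablaJ p x u = 0"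
    using g_self_eq_0_iff[OF p] by blast
  then show ?thesis by (simp add: eq_neg_iff_add_eq_0)
qed

lemma nijenhuis_eq_dJ:
  assumes p: "p \<in> U" and X: "X differentiable (at p)" and Y: "Y differentiable (at p)"
  shows "nijenhuis J X Y p
    = frechet_derivative J (at p) (J p *v X p) *v Y p - frechet_derivative J (at p) (J p *v Y p) *v X p
      + J p *v (frechet_derivative J (at p) (Y p) *v X p)
      - J p *v (frechet_derivative J (at p) (X p) *v Y p)"
  unfolding nijenhuis_def lie_def app_def
    frechet_derivative_matrix_vector_mult[OF J_differentiable[OF p] X]
    frechet_derivative_matrix_vector_mult[OF J_differentiable[OF p] Y]
  by (simp add: matrix_vector_right_distrib matrix_vector_mult_diff_distrib J_J_apply[OF p]
      algebra_simps)

lemma nijenhuis_eq_0_if_nablaJ_eq_0: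
  assumes p: "p \<in> U" and X: "X differentiable (at p)" and Y: "Y differentiable (at p)"
    and parallel: "\<And>x y. nablaJ p x y = 0"
  shows "nijenhuis J X Y p = 0"
proof -
  let ?G = "christoffel g p"
  have dJ: "frechet_derivative J (at p) u *v w = J p *v ?G u w - ?G u (J p *v w)" for u w
    using parallel[of u w] unfolding nablaJ_def by (simp add: algebra_simps)
  show ?thesis
    unfolding nijenhuis_eq_dJ[OF p X Y] dJ
    using christoffel_commute[OF p, of "J p *v X p" "Y p"]
      christoffel_commute[OF p, of "J p *v Y p" "X p"]
      christoffel_commute[OF p, of "J p *v X p" "J p *v Y p"]
      christoffel_commute[OF p, of "X p" "Y p"]
    by (simp add: matrix_vector_mult_diff_distrib J_J_apply[OF p])
qed

section \<open>Curvature of the Hermitian connection\<close>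

lemma differentiable_christoffel:
  assumes p: "p \<in> U" and a: "a differentiable (at p)" and b: "b differentiable (at p)"
  shows "(\<lambda>q. christoffel g q (a q) (b q)) differentiable (at p)"
proof -
  have dg: "(\<lambda>q. frechet_derivative g (at q) (c q)) differentiable (at p)"
    if "c differentiable (at p)" for c
    by (rule differentiable_frechet_derivative_mf[OF open_U smooth_g p that])
  have "(\<lambda>q. christoffel1 q (a q) (b q)) differentiable (at p)"
    unfolding christoffel1_def
    by (subst differentiable_vec_nth_iff)
      (simp add: differentiable_bil dg a b)
  then show ?thesis
    unfolding christoffel_eq
    using differentiable_matrix_inv_vector[OF open_U p _ g_differentiable[OF p]] invertible_g by blast
qed

lemma differentiable_lc:
  assumes X: "smooth_vf U X" and Z: "smooth_vf U Z" and p: "p \<in> U"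
  shows "lc g X Z differentiable (at p)"
  unfolding lc_def
  using differentiable_frechet_derivative_vf[OF open_U Z p] differentiable_christoffel[OF p]
    smooth_vf_differentiable[OF X p] smooth_vf_differentiable[OF Z p]
  by simp

lemma lc_cong:
  assumes p: "p \<in> U" and eq: "\<And>q. q \<in> U \<Longrightarrow> F q = F' q"
  shows "lc g X F p = lc g X F' p"
  unfolding lc_def using frechet_derivative_cong_open[OF open_U p eq] eq[OF p] by simp

lemma lc_add:
  assumes p: "p \<in> U" and "F differentiable (at p)" "F' differentiable (at p)"
  shows "lc g X (\<lambda>q. F q + F' q) p = lc g X F p + lc g X F' p"
  unfolding lc_def using assms by (simp add: frechet_derivative_add christoffel_add)

lemma lc_diff:
  assumes p: "p \<in> U" and "F differentiable (at p)" "F' differentiable (at p)"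
  shows "lc g X (\<lambda>q. F q - F' q) p = lc g X F p - lc g X F' p"
  unfolding lc_def using assms by (simp add: frechet_derivative_diff christoffel_diff)

lemma lc_scaleR:
  assumes p: "p \<in> U" and "F differentiable (at p)"
  shows "lc g X (\<lambda>q. c *\<^sub>R F q) p = c *\<^sub>R lc g X F p"
  unfolding lc_def using assms by (simp add: frechet_derivative_scaleR christoffel_scaleR scaleR_add_right)

lemma lc_minus:
  assumes p: "p \<in> U" and "F differentiable (at p)"
  shows "lc g X (\<lambda>q. - F q) p = - lc g X F p"
  unfolding lc_def using assms by (simp add: frechet_derivative_minus christoffel_minus)

lemma lc_app_J:
  assumes p: "p \<in> U" and F: "F differentiable (at p)"
  shows "lc g X (app J F) p = J p *v lc g X F p + nablaJ p (X p) (F p)"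
  unfolding lc_def nablaJ_def app_def frechet_derivative_matrix_vector_mult[OF J_differentiable[OF p] F]
  by (simp add: matrix_vector_right_distrib algebra_simps)

lemma herm_eq_lc:
  assumes p: "p \<in> U"
  shows "herm g J X F p = (1/2) *\<^sub>R lc g X F p - (1/2) *\<^sub>R (J p *v lc g X (app J F) p)"
  unfolding herm_def
  by (simp add: matrix_vector_mult_diff_distrib J_J_apply[OF p] vec_eq_iff algebra_simps)

lemma herm_herm_eq:
  assumes p: "p \<in> U" and Z: "Z differentiable (at p)" and W1: "lc g Y Z differentiable (at p)"
    and W2: "lc g Y (app J Z) differentiable (at p)"
  shows "herm g J X (herm g J Y Z) p
    = (1/2) *\<^sub>R lc g X (lc g Y Z) p - (1/2) *\<^sub>R (J p *v lc g X (lc g Y (app J Z)) p)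
      - (1/4) *\<^sub>R nablaJ p (X p) (nablaJ p (Y p) (Z p))"
proof -
  let ?W1 = "lc g Y Z" and ?W2 = "lc g Y (app J Z)" and ?x = "X p"
  have JW1: "(\<lambda>q. J q *v ?W1 q) differentiable (at p)"
    and JW2: "(\<lambda>q. J q *v ?W2 q) differentiable (at p)"
    using differentiable_matrix_vector_mult[OF J_differentiable[OF p]] W1 W2 by blast+
  have "lc g X (herm g J Y Z) p = lc g X (\<lambda>q. (1/2) *\<^sub>R ?W1 q - (1/2) *\<^sub>R (J q *v ?W2 q)) p"
    by (rule lc_cong[OF p herm_eq_lc])
  also have "\<dots> = (1/2) *\<^sub>R lc g X ?W1 p - (1/2) *\<^sub>R lc g X (app J ?W2) p"
    using W1 JW2 by (simp add: lc_diff[OF p] lc_scaleR[OF p] app_def)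
  finally have herm_Y: "lc g X (herm g J Y Z) p
      = (1/2) *\<^sub>R lc g X ?W1 p - (1/2) *\<^sub>R (J p *v lc g X ?W2 p + nablaJ p ?x (?W2 p))"
    by (simp add: lc_app_J[OF p W2])
  have "app J (herm g J Y Z) q = (1/2) *\<^sub>R (J q *v ?W1 q) + (1/2) *\<^sub>R ?W2 q" if "q \<in> U" for q
    by (simp add: app_def herm_eq_lc[OF that] matrix_vector_mult_diff_distrib matrix_vector_mult_scaleR
        J_J_apply[OF that])
  then have "lc g X (app J (herm g J Y Z)) p
      = lc g X (\<lambda>q. (1/2) *\<^sub>R (J q *v ?W1 q) + (1/2) *\<^sub>R ?W2 q) p"
    by (rule lc_cong[OF p])
  also have "\<dots> = (1/2) *\<^sub>R lc g X (app J ?W1) p + (1/2) *\<^sub>R lc g X ?W2 p"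
    using W2 JW1 by (simp add: lc_add[OF p] lc_scaleR[OF p] app_def)
  finally have J_herm_Y: "lc g X (app J (herm g J Y Z)) p
      = (1/2) *\<^sub>R (J p *v lc g X ?W1 p + nablaJ p ?x (?W1 p)) + (1/2) *\<^sub>R lc g X ?W2 p"
    by (simp add: lc_app_J[OF p W1])
  have "nablaJ p ?x (?W2 p) = - (J p *v nablaJ p ?x (?W1 p)) + nablaJ p ?x (nablaJ p (Y p) (Z p))"
    by (simp add: lc_app_J[OF p Z] nablaJ_add[OF p] nablaJ_J[OF p])
  then show ?thesis
    unfolding herm_eq_lc[OF p, of X] herm_Y J_herm_Y
    by (simp add: matrix_vector_right_distrib matrix_vector_mult_diff_distrib matrix_vector_mult_scaleR
        J_J_apply[OF p] vec.neg vec_eq_iff algebra_simps)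
qed

definition nablaJ_commutator :: "real^'n \<Rightarrow> real^'n \<Rightarrow> real^'n \<Rightarrow> real^'n \<Rightarrow> real^'n" where
  "nablaJ_commutator p x y w = nablaJ p x (nablaJ p y w) - nablaJ p y (nablaJ p x w)"

definition riemann :: "(real^'n \<Rightarrow> real^'n) \<Rightarrow> (real^'n \<Rightarrow> real^'n) \<Rightarrow> (real^'n \<Rightarrow> real^'n)
    \<Rightarrow> real^'n \<Rightarrow> real^'n" where
  "riemann X Y Z p = lc g X (lc g Y Z) p - lc g Y (lc g X Z) p - lc g (lie X Y) Z p"

lemma curv_lc_eq_riemann: "curv g (lc g) X Y Z W p = bil (g p) (riemann X Y Z p) (W p)"
  by (simp add: curv_def riemann_def)

lemma curv_herm_eq_riemann:
  assumes p: "p \<in> U" and X: "smooth_vf U X" and Y: "smooth_vf U Y" and Z: "smooth_vf U Z"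
  shows "curv g (herm g J) X Y Z W p = bil (g p)
     ((1/2) *\<^sub>R riemann X Y Z p - (1/2) *\<^sub>R (J p *v riemann X Y (app J Z) p)
      - (1/4) *\<^sub>R nablaJ_commutator p (X p) (Y p) (Z p)) (W p)"
proof -
  have Zd: "Z differentiable (at p)" by (rule smooth_vf_differentiable[OF Z p])
  have JZ: "smooth_vf U (app J Z)" by (rule smooth_vf_app[OF open_U smooth_J Z])
  show ?thesis
    unfolding curv_def riemann_def nablaJ_commutator_def herm_eq_lc[OF p, of "lie X Y"]
      herm_herm_eq[OF p Zd differentiable_lc[OF Y Z p] differentiable_lc[OF Y JZ p]]
      herm_herm_eq[OF p Zd differentiable_lc[OF X Z p] differentiable_lc[OF X JZ p]]
    by (simp add: matrix_vector_right_distrib matrix_vector_mult_diff_distrib matrix_vector_mult_scaleR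
        vec_eq_iff algebra_simps)
qed

lemma riemann_app_J_J:
  assumes p: "p \<in> U" and X: "smooth_vf U X" and Y: "smooth_vf U Y" and Z: "smooth_vf U Z"
  shows "riemann X Y (app J (app J Z)) p = - riemann X Y Z p"
proof -
  have lc_JJ: "lc g A (app J (app J Z)) q = - lc g A Z q" if q: "q \<in> U" for q A
  proof -
    have "lc g A (app J (app J Z)) q = lc g A (\<lambda>q. - Z q) q"
      by (rule lc_cong[OF q]) (simp add: app_def J_J_apply)
    also have "\<dots> = - lc g A Z q" by (rule lc_minus[OF q smooth_vf_differentiable[OF Z q]])
    finally show ?thesis .
  qed
  have "lc g B (lc g A (app J (app J Z))) p = - lc g B (lc g A Z) p" if A: "smooth_vf U A" for A B
  proof -
    have "lc g B (lc g A (app J (app J Z))) p = lc g B (\<lambda>q. - lc g A Z q) p"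
      by (rule lc_cong[OF p lc_JJ])
    also have "\<dots> = - lc g B (lc g A Z) p" by (rule lc_minus[OF p differentiable_lc[OF A Z p]])
    finally show ?thesis .
  qed
  then show ?thesis
    unfolding riemann_def using X Y lc_JJ[OF p] by simp
qed

section \<open>Vanishing of \<open>\<nabla>J\<close>\<close>

lemma nablaJ_commutator_J:
  assumes p: "p \<in> U"
  shows "nablaJ_commutator p x (J p *v x) w = 2 *\<^sub>R (J p *v nablaJ p x (nablaJ p x w))"
proof -
  have "nablaJ_commutator p x (J p *v x) w
      = J p *v nablaJ p x (nablaJ p x w) + J p *v nablaJ p x (nablaJ p x w)"
    unfolding nablaJ_commutator_def nablaJ_J_direction[OF p] nablaJ_minus[OF p] nablaJ_J[OF p]
    by simp
  then show ?thesis by (simp only: scaleR_2)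
qed

lemma nablaJ_eq_0_if_commutator_J_symmetric:
  assumes p: "p \<in> U"
    and sym: "bil (g p) (nablaJ_commutator p x (J p *v x) (J p *v y)) y
      = bil (g p) (nablaJ_commutator p x (J p *v x) y) (J p *v y)"
  shows "nablaJ p x y = 0"
proof -
  let ?T = "nablaJ p x"
  have skew: "bil (g p) (?T (?T y)) y = - bil (g p) (?T y) (?T y)"
    by (rule g_nablaJ_skew[OF p])
  have "bil (g p) (nablaJ_commutator p x (J p *v x) y) (J p *v y) = - 2 * bil (g p) (?T y) (?T y)"
    by (simp add: nablaJ_commutator_J[OF p] bil_scaleR_left g_J_J[OF p] skew)
  moreover have "bil (g p) (nablaJ_commutator p x (J p *v x) (J p *v y)) y = 2 * bil (g p) (?T y) (?T y)"
    by (simp add: nablaJ_commutator_J[OF p] nablaJ_J[OF p] nablaJ_minus[OF p] J_J_apply[OF p] vec.neg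
        bil_scaleR_left bil_minus_left skew)
  ultimately have "bil (g p) (?T y) (?T y) = 0" using sym by linarith
  then show ?thesis using g_self_eq_0_iff[OF p] by blast
qed

text \<open>The hypothesis is used for the constant fields \<open>x, y\<close> and for \<open>x, J y\<close>: adding the two
  instances cancels the Riemannian curvature terms.\<close>

lemma commutator_J_symmetric_if_curv_herm_eq_curv_lc:
  assumes hyp: "\<forall>X Y. smooth_vf U X \<longrightarrow> smooth_vf U Y \<longrightarrow>
           (\<forall>p\<in>U. curv g (herm g J) X (app J X) Y (app J Y) p
                  = curv g (lc g) X (app J X) Y (app J Y) p)"
    and p: "p \<in> U"
  shows "bil (g p) (nablaJ_commutator p x (J p *v x) (J p *v y)) y
      = bil (g p) (nablaJ_commutator p x (J p *v x) y) (J p *v y)"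
proof -
  let ?X = "\<lambda>_::real^'n. x" and ?Y = "\<lambda>_::real^'n. y"
  let ?C = "nablaJ_commutator p x (J p *v x)" and ?G = "bil (g p)"
  let ?a = "riemann ?X (app J ?X) ?Y p" and ?b = "riemann ?X (app J ?X) (app J ?Y) p"
  have X: "smooth_vf U ?X" and Y: "smooth_vf U ?Y"
    using smooth_vf_const[OF open_U] by auto
  have JX: "smooth_vf U (app J ?X)" and JY: "smooth_vf U (app J ?Y)"
    using smooth_vf_app[OF open_U smooth_J] X Y by auto
  have app_X: "app J ?X p = J p *v x" and app_Y: "app J ?Y p = J p *v y"
    and app_JY: "app J (app J ?Y) p = J p *v (J p *v y)"
    by (simp_all add: app_def)
  have "?G ((1/2) *\<^sub>R ?a - (1/2) *\<^sub>R (J p *v ?b) - (1/4) *\<^sub>R ?C y) (J p *v y) = ?G ?a (J p *v y)"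
    using hyp[rule_format, OF X Y p] curv_herm_eq_riemann[OF p X JX Y, of "app J ?Y"]
      curv_lc_eq_riemann[of ?X "app J ?X" ?Y "app J ?Y" p]
    by (simp add: app_X app_Y)
  then have at_y: "(1/2) * ?G ?a (J p *v y) - (1/2) * ?G ?b y - (1/4) * ?G (?C y) (J p *v y)
      = ?G ?a (J p *v y)"
    by (simp add: bil_diff_left bil_scaleR_left g_J_J[OF p])
  have "?G ((1/2) *\<^sub>R ?b - (1/2) *\<^sub>R (J p *v (- ?a)) - (1/4) *\<^sub>R ?C (J p *v y)) (- y) = ?G ?b (- y)"
    using hyp[rule_format, OF X JY p] curv_herm_eq_riemann[OF p X JX JY, of "app J (app J ?Y)"]
      curv_lc_eq_riemann[of ?X "app J ?X" "app J ?Y" "app J (app J ?Y)" p]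
      riemann_app_J_J[OF p X JX Y]
    by (simp add: app_X app_Y app_JY J_J_apply[OF p])
  then have at_Jy: "- (1/2) * ?G ?b y + (1/2) * ?G ?a (J p *v y) + (1/4) * ?G (?C (J p *v y)) y
      = - ?G ?b y"
    by (simp add: bil_diff_left bil_add_left bil_scaleR_left bil_minus_left bil_minus_right vec.neg
        g_J_left[OF p])
  from at_y at_Jy show ?thesis by linarith
qed

end

theorem mainTheorem8:
  fixes U :: "(real^'n::finite) set" and g J \<kappa> :: "real^'n \<Rightarrow> real^'n^'n"
  assumes "almost_kahler U g J \<kappa>"
    and "\<forall>X Y. smooth_vf U X \<longrightarrow> smooth_vf U Y \<longrightarrow>
           (\<forall>p\<in>U. curv g (herm g J) X (app J X) Y (app J Y) p
                  = curv g (lc g) X (app J X) Y (app J Y) p)"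
  shows "integrable_acs U J"
proof -
  interpret almost_kahler_chart U g J \<kappa>
    by (rule almost_kahler_chart.intro) (rule assms(1))
  show ?thesis
    unfolding integrable_acs_def
  proof (intro allI impI ballI)
    fix X Y p
    assume X: "smooth_vf U X" and Y: "smooth_vf U Y" and p: "p \<in> U"
    have "nablaJ p x y = 0" for x y
      using nablaJ_eq_0_if_commutator_J_symmetric[OF p]
        commutator_J_symmetric_if_curv_herm_eq_curv_lc[OF assms(2) p] by blast
    then show "nijenhuis J X Y p = 0"
      using nijenhuis_eq_0_if_nablaJ_eq_0[OF p] smooth_vf_differentiable[OF X p]
        smooth_vf_differentiable[OF Y p] by blast
  qed
qed

end
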